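(* For every integer $r\ge 7$, ${\rm dim}_s(P_5\diamond P_r)={\rm dim}_s(P_5\diamond C_r)=3r-2$.
   Context: The modular product $G\diamond H$ has vertex set $V(G)\times V(H)$; distinct vertices $(g,h)$ and $(g',h')$ are adjacent iff ($g=g'$ and $hh'\in E(H)$), or ($gg'\in E(G)$ and $h=h'$), or ($gg'\in E(G)$ and $hh'\in E(H)$), or ($g\neq g'$, $h\neq h'$, $gg'\notin E(G)$ and $hh'\notin E(H)$). $P_n$ and $C_n$ are the path and cycle on $n$ vertices. ${\rm dim}_s(X)$ is the strong metric dimension: the minimum size of $S\subseteq V(X)$ such that for all distinct $x,y$ some $z\in S$ has $d_X(y,z)=d_X(y,x)+d_X(x,z)$ or $d_X(x,z)=d_X(x,y)+d_X(y,z)$. *)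

theory Defs
  imports Main
begin

(* A finite simple graph is given by a vertex set V and a symmetric irreflexive
   adjacency relation E (only its restriction to V matters). *)

definition path_V :: "nat \<Rightarrow> nat set" where
  "path_V n = {0..<n}"

definition path_E :: "nat \<Rightarrow> nat \<Rightarrow> bool" where
  "path_E i j \<longleftrightarrow> (i + 1 = j \<or> j + 1 = i)"

definition cycle_V :: "nat \<Rightarrow> nat set" where
  "cycle_V n = {0..<n}"

definition cycle_E :: "nat \<Rightarrow> nat \<Rightarrow> nat \<Rightarrow> bool" where
  "cycle_E n i j \<longleftrightarrow> i \<noteq> j \<and> (j = (i + 1) mod n \<or> i = (j + 1) mod n)"

definition modprod_V :: "'a set \<Rightarrow> 'b set \<Rightarrow> ('a \<times> 'b) set" where
  "modprod_V VG VH = VG \<times> VH"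

definition modprod_E :: "('a \<Rightarrow> 'a \<Rightarrow> bool) \<Rightarrow> ('b \<Rightarrow> 'b \<Rightarrow> bool)
    \<Rightarrow> 'a \<times> 'b \<Rightarrow> 'a \<times> 'b \<Rightarrow> bool" where
  "modprod_E EG EH x y \<longleftrightarrow>
     (case x of (g, h) \<Rightarrow> case y of (g', h') \<Rightarrow>
       (g, h) \<noteq> (g', h') \<and>
       ((g = g' \<and> EH h h') \<or> (EG g g' \<and> h = h') \<or> (EG g g' \<and> EH h h') \<or>
        (g \<noteq> g' \<and> h \<noteq> h' \<and> \<not> EG g g' \<and> \<not> EH h h')))"

definition is_walk :: "'a set \<Rightarrow> ('a \<Rightarrow> 'a \<Rightarrow> bool) \<Rightarrow> 'a list \<Rightarrow> nat \<Rightarrow> 'a \<Rightarrow> 'a \<Rightarrow> bool" where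
  "is_walk V E p n x y \<longleftrightarrow> length p = Suc n \<and> hd p = x \<and> last p = y \<and> set p \<subseteq> V \<and>
     (\<forall>i<n. E (p ! i) (p ! Suc i))"

(* shortest-path distance (used only on connected graphs) *)
definition gdist :: "'a set \<Rightarrow> ('a \<Rightarrow> 'a \<Rightarrow> bool) \<Rightarrow> 'a \<Rightarrow> 'a \<Rightarrow> nat" where
  "gdist V E x y = (LEAST n. \<exists>p. is_walk V E p n x y)"

definition strong_resolving :: "'a set \<Rightarrow> ('a \<Rightarrow> 'a \<Rightarrow> bool) \<Rightarrow> 'a set \<Rightarrow> bool" where
  "strong_resolving V E S \<longleftrightarrow> S \<subseteq> V \<and>
     (\<forall>x\<in>V. \<forall>y\<in>V. x \<noteq> y \<longrightarrow>
        (\<exists>z\<in>S. gdist V E y z = gdist V E y x + gdist V E x z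
               \<or> gdist V E x z = gdist V E x y + gdist V E y z))"

definition sdim :: "'a set \<Rightarrow> ('a \<Rightarrow> 'a \<Rightarrow> bool) \<Rightarrow> nat" where
  "sdim V E = (LEAST k. \<exists>S. strong_resolving V E S \<and> card S = k)"

end

(*
  Call {g} \<times> V(H) a column and P\<^sub>5 \<times> {h} a fibre of P\<^sub>5 \<diamond> H.  For a triangle-free H without
  isolated vertices or isolated edges in which any two vertices have a common non-neighbour
  (P\<^sub>r and C\<^sub>r for r \<ge> 7), the distance in P\<^sub>5 \<diamond> H is explicit: 1 on edges, 3 between the
  antipodal vertices (g,h) and (g+3,h), and 2 otherwise.  Hence a strong resolving set meets
  every antipodal pair, giving at least |V(H)| vertices in the columns 0,3 and in the columns 1,4,
  and meets every pair (2,h),(2,k) with h,k distinct and non-adjacent, so by triangle-freeness it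
  misses at most two vertices of column 2: at least 3|V(H)| - 2 vertices in all.  Conversely, for an
  induced path a-b-c of H, columns 0 and 1 together with column 2 minus (2,a),(2,b) form a strong
  resolving set: a vertex in column 3 or 4 is resolved from any other by its antipode, which lies
  on a geodesic through every vertex, and (2,a),(2,b) are resolved by (2,c).
*)
theory Submission
  imports Defs
begin

lemma is_walk_singleton: "x \<in> V \<Longrightarrow> is_walk V E [x] 0 x x"
  by (simp add: is_walk_def)

lemma is_walk_Cons:
  assumes "is_walk V E p n (hd p) z" "x \<in> V" "E x (hd p)"
  shows "is_walk V E (x # p) (Suc n) x z"
proof -
  have "p \<noteq> []" using assms(1) by (auto simp: is_walk_def)
  then have "p ! 0 = hd p" by (simp add: hd_conv_nth)
  then show ?thesis
    using assms \<open>p \<noteq> []\<close> by (auto simp: is_walk_def less_Suc_eq_0_disj)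
qed

locale P5_modprod =
  fixes VH :: "'b set" and EH :: "'b \<Rightarrow> 'b \<Rightarrow> bool"
  assumes finite_VH: "finite VH"
    and VH_nonempty: "VH \<noteq> {}"
    and EH_sym: "EH h k \<Longrightarrow> EH k h"
    and EH_irrefl: "\<not> EH h h"
    and triangle_free: "\<lbrakk>a \<in> VH; b \<in> VH; c \<in> VH; EH a b; EH b c; EH a c\<rbrakk> \<Longrightarrow> False"
    and no_isolated_vertex: "h \<in> VH \<Longrightarrow> \<exists>k\<in>VH. EH h k"
    and no_isolated_edge: "\<lbrakk>h \<in> VH; k \<in> VH; EH h k\<rbrakk> \<Longrightarrow>
       (\<exists>c\<in>VH. c \<noteq> k \<and> EH h c) \<or> (\<exists>c\<in>VH. c \<noteq> h \<and> EH k c)"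
    and common_non_neighbour: "\<lbrakk>h \<in> VH; k \<in> VH\<rbrakk> \<Longrightarrow>
       \<exists>c\<in>VH. c \<noteq> h \<and> c \<noteq> k \<and> \<not> EH h c \<and> \<not> EH k c"
begin

abbreviation "V \<equiv> modprod_V (path_V 5) VH"
abbreviation "E \<equiv> modprod_E path_E EH"

lemma EH_commute: "EH h k \<longleftrightarrow> EH k h"
  using EH_sym by blast

lemma mem_V: "x \<in> V \<longleftrightarrow> fst x < 5 \<and> snd x \<in> VH"
  by (cases x) (auto simp: modprod_V_def path_V_def)

lemma finite_V: "finite V"
  by (simp add: modprod_V_def path_V_def finite_VH)

lemma E_iff: "E (g,h) (g',k) \<longleftrightarrow> (g,h) \<noteq> (g',k) \<and>
   ((g = g' \<and> EH h k) \<or> ((g+1 = g' \<or> g'+1 = g) \<and> h = k) \<or> ((g+1 = g' \<or> g'+1 = g) \<and> EH h k) \<or>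
    (g \<noteq> g' \<and> h \<noteq> k \<and> \<not> (g+1 = g' \<or> g'+1 = g) \<and> \<not> EH h k))"
  by (simp add: modprod_E_def path_E_def)

lemma E_irrefl: "\<not> E x x"
  by (cases x) (simp add: E_iff)

lemma E_sym: "E x y \<Longrightarrow> E y x"
  by (cases x; cases y) (auto simp: E_iff EH_commute)

lemma E_same_fibre: "E (g,h) (g',h) \<longleftrightarrow> g+1 = g' \<or> g'+1 = g"
  using EH_irrefl[of h] by (auto simp: E_iff)

lemma E_adjacent_fibres: "EH h k \<Longrightarrow> E (g,h) (g',k) \<longleftrightarrow> g = g' \<or> g+1 = g' \<or> g'+1 = g"
  using EH_irrefl[of h] by (auto simp: E_iff)

lemma E_nonadjacent_fibres:
  "\<lbrakk>h \<noteq> k; \<not> EH h k\<rbrakk> \<Longrightarrow> E (g,h) (g',k) \<longleftrightarrow> g \<noteq> g' \<and> g+1 \<noteq> g' \<and> g'+1 \<noteq> g"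
  by (auto simp: E_iff)

definition antipodal :: "nat \<times> 'b \<Rightarrow> nat \<times> 'b \<Rightarrow> bool" where
  "antipodal x y \<longleftrightarrow> snd x = snd y \<and> (fst x + 3 = fst y \<or> fst y + 3 = fst x)"

definition mdist :: "nat \<times> 'b \<Rightarrow> nat \<times> 'b \<Rightarrow> nat" where
  "mdist x y = (if x = y then 0 else if E x y then 1 else if antipodal x y then 3 else 2)"

lemma mdist_le_3: "mdist x y \<le> 3"
  by (simp add: mdist_def)

lemma mdist_eq_0_iff: "mdist x y = 0 \<longleftrightarrow> x = y"
  by (simp add: mdist_def)

lemma mdist_commute: "mdist x y = mdist y x"
  using E_sym by (auto simp: mdist_def antipodal_def)

lemma mdist_same_fibre:
  "mdist (g,h) (g',h) =
    (if g = g' then 0 else if g+1 = g' \<or> g'+1 = g then 1 else if g+3 = g' \<or> g'+3 = g then 3 else 2)"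
  by (simp add: mdist_def E_same_fibre antipodal_def)

lemma mdist_distinct_fibres: "h \<noteq> k \<Longrightarrow> mdist (g,h) (g',k) = (if E (g,h) (g',k) then 1 else 2)"
  by (simp add: mdist_def antipodal_def)

lemma mdist_antipodal: "antipodal x y \<Longrightarrow> mdist x y = 3"
  by (cases x; cases y) (auto simp: mdist_def antipodal_def E_iff)

lemma antipodal_no_common_neighbour:
  assumes "antipodal x y" "E x w" "E w y" "x \<in> V" "y \<in> V" "w \<in> V"
  shows False
proof -
  obtain g h g' d k where xyw: "x = (g,h)" "y = (g',h)" "w = (d,k)" "g + 3 = g' \<or> g' + 3 = g"
    using assms(1) by (cases x; cases y; cases w) (auto simp: antipodal_def)
  have "g < 5" "g' < 5" "d < 5" using assms(4-6) xyw by (simp_all add: mem_V)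
  consider "k = h" | "EH h k" | "k \<noteq> h" "\<not> EH h k"
    by blast
  then show False
  proof cases
    case 1 then show ?thesis using assms(2,3) xyw by (simp add: E_same_fibre; arith)
  next
    case 2 then show ?thesis
      using assms(2,3) xyw E_adjacent_fibres EH_sym[OF 2] by (simp; arith)
  next
    case 3
    then have "\<not> EH k h" using EH_sym by blast
    then have "g \<noteq> d \<and> g+1 \<noteq> d \<and> d+1 \<noteq> g" "d \<noteq> g' \<and> d+1 \<noteq> g' \<and> g'+1 \<noteq> d"
      using 3 assms(2,3) xyw E_nonadjacent_fibres[of h k] E_nonadjacent_fibres[of k h] by auto
    then show ?thesis using xyw(4) \<open>g < 5\<close> \<open>g' < 5\<close> \<open>d < 5\<close> by arith
  qed
qed

lemma mdist_le_Suc_mdist: "\<lbrakk>E x w; x \<in> V; y \<in> V; w \<in> V\<rbrakk> \<Longrightarrow> mdist x y \<le> Suc (mdist w y)"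
  using antipodal_no_common_neighbour[of x y w] E_irrefl[of x]
  by (auto simp: mdist_def)

lemma walk_length_ge_mdist: "is_walk V E p n x y \<Longrightarrow> mdist x y \<le> n"
proof (induction n arbitrary: p x)
  case 0
  then obtain a where "p = [a]" by (cases p) (auto simp: is_walk_def)
  with 0 show ?case by (auto simp: is_walk_def mdist_def)
next
  case (Suc n)
  then obtain p' where p: "p = x # p'" "length p' = Suc n"
    by (cases p) (auto simp: is_walk_def)
  then have "p' \<noteq> []" by auto
  have "is_walk V E p' n (hd p') y"
    unfolding is_walk_def
  proof (intro conjI allI impI)
    fix i assume "i < n"
    then show "E (p' ! i) (p' ! Suc i)"
      using Suc.prems p by (auto simp: is_walk_def)
  qed (use Suc.prems p \<open>p' \<noteq> []\<close> in \<open>auto simp: is_walk_def\<close>)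
  moreover have "E x (hd p')" "x \<in> V" "hd p' \<in> V" "y \<in> V"
    using Suc.prems p \<open>p' \<noteq> []\<close> by (auto simp: is_walk_def hd_conv_nth)
  ultimately show ?case using Suc.IH mdist_le_Suc_mdist by (meson le_trans not_less_eq_eq)
qed

lemma common_neighbour_same_fibre:
  assumes "g + 2 \<le> g'" "g' < 5" "g' \<noteq> g + 3" "h \<in> VH"
  shows "\<exists>w\<in>V. E (g,h) w \<and> E w (g',h)"
proof (cases "g' = g + 2")
  case True
  then show ?thesis using assms by (intro bexI[of _ "(g+1,h)"]) (auto simp: mem_V E_same_fibre)
next
  case False
  then have "g = 0" "g' = 4" using assms(1-3) by auto
  obtain c where c: "c \<in> VH" "c \<noteq> h" "\<not> EH h c"
    using common_non_neighbour[OF assms(4) assms(4)] by blast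
  then have "E (g,h) (2,c)" "E (2,c) (g',h)"
    using \<open>g = 0\<close> \<open>g' = 4\<close> E_nonadjacent_fibres[of h c] E_nonadjacent_fibres[of c h] EH_commute by auto
  then show ?thesis using c by (intro bexI[of _ "(2,c)"]) (auto simp: mem_V)
qed

lemma common_neighbour_adjacent_fibres:
  assumes "g < 5" "g' < 5" "h \<in> VH" "k \<in> VH" "EH h k" "g \<noteq> g'" "g+1 \<noteq> g'" "g'+1 \<noteq> g"
  shows "\<exists>w\<in>V. E (g,h) w \<and> E w (g',k)"
  using no_isolated_edge[OF assms(3-5)]
proof
  assume "\<exists>c\<in>VH. c \<noteq> k \<and> EH h c"
  then obtain c where c: "c \<in> VH" "c \<noteq> k" "EH h c" by blast
  then have "\<not> EH c k" using triangle_free[OF assms(3) c(1) assms(4)] assms(5) by blast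
  then have "E (g,h) (g,c)" "E (g,c) (g',k)"
    using c assms E_adjacent_fibres E_nonadjacent_fibres[of c k] by auto
  then show ?thesis using c assms by (intro bexI[of _ "(g,c)"]) (auto simp: mem_V)
next
  assume "\<exists>c\<in>VH. c \<noteq> h \<and> EH k c"
  then obtain c where c: "c \<in> VH" "c \<noteq> h" "EH k c" by blast
  then have "\<not> EH h c" using triangle_free[OF assms(3,4) c(1)] assms(5) by blast
  then have "E (g,h) (g',c)" "E (g',c) (g',k)"
    using c assms E_adjacent_fibres[of c k] E_nonadjacent_fibres[of h c] EH_commute by auto
  then show ?thesis using c assms by (intro bexI[of _ "(g',c)"]) (auto simp: mem_V)
qed

lemma common_neighbour_nonadjacent_fibres:
  assumes "g < 5" "g' < 5" "h \<in> VH" "k \<in> VH" "h \<noteq> k" "\<not> EH h k"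
    and "g = g' \<or> g+1 = g' \<or> g'+1 = g"
  shows "\<exists>w\<in>V. E (g,h) w \<and> E w (g',k)"
proof -
  obtain c where c: "c \<in> VH" "c \<noteq> h" "c \<noteq> k" "\<not> EH h c" "\<not> EH k c"
    using common_non_neighbour[OF assms(3,4)] by blast
  define d where "d = (if max g g' \<le> 2 then 4 else (0::nat))"
  have d: "d < 5" "d \<noteq> g" "d+1 \<noteq> g" "g+1 \<noteq> d" "d \<noteq> g'" "d+1 \<noteq> g'" "g'+1 \<noteq> d"
    using assms(1,2,7) unfolding d_def by auto
  have "E (g,h) (d,c)" "E (d,c) (g',k)"
    using c d E_nonadjacent_fibres[of h c] E_nonadjacent_fibres[of c k] EH_commute by auto
  then show ?thesis using c d by (intro bexI[of _ "(d,c)"]) (auto simp: mem_V)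
qed

lemma common_neighbour:
  assumes "x \<in> V" "y \<in> V" "x \<noteq> y" "\<not> E x y" "\<not> antipodal x y"
  shows "\<exists>w\<in>V. E x w \<and> E w y"
proof -
  obtain g h g' k where xy: "x = (g,h)" "y = (g',k)" by (cases x; cases y)
  have gh: "g < 5" "g' < 5" "h \<in> VH" "k \<in> VH" using assms(1,2) xy by (auto simp: mem_V)
  consider "k = h" | "EH h k" | "h \<noteq> k" "\<not> EH h k" by blast
  then show ?thesis
  proof cases
    case 1
    then have "g + 2 \<le> g' \<and> g' \<noteq> g + 3 \<or> g' + 2 \<le> g \<and> g \<noteq> g' + 3"
      using assms(3-5) xy by (auto simp: E_same_fibre antipodal_def)
    then show ?thesis
      using 1 xy gh common_neighbour_same_fibre[of g g' h] common_neighbour_same_fibre[of g' g h] E_sym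
      by blast
  next
    case 2 then show ?thesis
      using assms(4) xy gh common_neighbour_adjacent_fibres by (auto simp: E_adjacent_fibres)
  next
    case 3 then show ?thesis
      using assms(4) xy gh common_neighbour_nonadjacent_fibres by (auto simp: E_nonadjacent_fibres)
  qed
qed

lemma antipodal_walk:
  assumes "g + 3 < 5" "h \<in> VH" "a \<in> VH" "EH h a"
  shows "is_walk V E [(g,h), (g+1,h), (g+2,a), (g+3,h)] 3 (g,h) (g+3,h)"
    and "is_walk V E [(g+3,h), (g+2,a), (g+1,h), (g,h)] 3 (g+3,h) (g,h)"
  unfolding numeral_3_eq_3
  by (intro is_walk_Cons is_walk_singleton;
      use assms EH_sym[OF assms(4)] in \<open>simp add: mem_V E_same_fibre E_adjacent_fibres\<close>)+

lemma walk_of_length_mdist: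
  assumes "x \<in> V" "y \<in> V"
  shows "\<exists>p. is_walk V E p (mdist x y) x y"
proof -
  consider "x = y" | "x \<noteq> y" "E x y" | "x \<noteq> y" "\<not> E x y" "\<not> antipodal x y"
    | "x \<noteq> y" "\<not> E x y" "antipodal x y"
    by blast
  then show ?thesis
  proof cases
    case 1 then show ?thesis using is_walk_singleton[OF assms(1)] by (auto simp: mdist_def)
  next
    case 2
    then have "is_walk V E [x,y] 1 x y"
      using assms by (simp add: is_walk_def)
    then show ?thesis using 2 by (auto simp: mdist_def)
  next
    case 3
    then obtain w where "w \<in> V" "E x w" "E w y" using common_neighbour assms by blast
    then have "is_walk V E [x,w,y] 2 x y"
      using assms by (auto simp: is_walk_def less_Suc_eq numeral_2_eq_2)
    then show ?thesis using 3 by (auto simp: mdist_def)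
  next
    case 4
    then obtain g g' h where xy: "x = (g,h)" "y = (g',h)" "g + 3 = g' \<or> g' + 3 = g"
      by (cases x; cases y) (auto simp: antipodal_def)
    have "g < 5" "g' < 5" "h \<in> VH" using assms xy by (auto simp: mem_V)
    moreover obtain a where "a \<in> VH" "EH h a" using no_isolated_vertex \<open>h \<in> VH\<close> by blast
    ultimately have "\<exists>p. is_walk V E p 3 x y"
      using xy antipodal_walk(1)[of g h a] antipodal_walk(2)[of g' h a] by auto
    then show ?thesis using 4 by (auto simp: mdist_def)
  qed
qed

lemma gdist_eq_mdist: "\<lbrakk>x \<in> V; y \<in> V\<rbrakk> \<Longrightarrow> gdist V E x y = mdist x y"
  unfolding gdist_def
  by (rule Least_equality) (auto intro: walk_of_length_mdist walk_length_ge_mdist)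

definition strongly_resolves :: "nat \<times> 'b \<Rightarrow> nat \<times> 'b \<Rightarrow> nat \<times> 'b \<Rightarrow> bool" where
  "strongly_resolves z x y \<longleftrightarrow>
     mdist y z = mdist y x + mdist x z \<or> mdist x z = mdist x y + mdist y z"

lemma strong_resolving_iff:
  "strong_resolving V E S \<longleftrightarrow>
     S \<subseteq> V \<and> (\<forall>x\<in>V. \<forall>y\<in>V. x \<noteq> y \<longrightarrow> (\<exists>z\<in>S. strongly_resolves z x y))"
proof -
  have gdist_resolves:
    "(\<exists>z\<in>S. gdist V E y z = gdist V E y x + gdist V E x z
            \<or> gdist V E x z = gdist V E x y + gdist V E y z)
     \<longleftrightarrow> (\<exists>z\<in>S. strongly_resolves z x y)"
    if "S \<subseteq> V" "x \<in> V" "y \<in> V" for x y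
    using that by (intro bex_cong) (auto simp: strongly_resolves_def gdist_eq_mdist)
  show ?thesis
    unfolding strong_resolving_def by (simp add: gdist_resolves cong: conj_cong)
qed

lemma antipodal_pair_meets:
  assumes "strong_resolving V E S" "antipodal u v" "u \<in> V" "v \<in> V"
  shows "u \<in> S \<or> v \<in> S"
proof -
  have "u \<noteq> v" "mdist u v = 3" "mdist v u = 3"
    using assms(2) mdist_antipodal mdist_commute by (auto simp: antipodal_def)
  moreover obtain z where "z \<in> S" "strongly_resolves z u v"
    using assms(1,3,4) \<open>u \<noteq> v\<close> unfolding strong_resolving_iff by blast
  ultimately have "mdist u z = 0 \<or> mdist v z = 0"
    using mdist_le_3[of u z] mdist_le_3[of v z] by (auto simp: strongly_resolves_def)
  then show ?thesis using \<open>z \<in> S\<close> by (auto simp: mdist_eq_0_iff)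
qed

lemma middle_pair_meets:
  assumes "strong_resolving V E S" "h \<in> VH" "k \<in> VH" "h \<noteq> k" "\<not> EH h k"
  shows "(2,h) \<in> S \<or> (2,k) \<in> S"
proof -
  have "mdist (2,h) (2,k) = 2" "mdist (2,k) (2,h) = 2"
    using assms(4,5) EH_commute by (auto simp: mdist_distinct_fibres E_nonadjacent_fibres)
  moreover have "(2,h) \<in> V" "(2,k) \<in> V" "(2,h) \<noteq> (2,k)"
    using assms(2-4) by (auto simp: mem_V)
  then obtain z where "z \<in> S" "strongly_resolves z (2,h) (2,k)"
    using assms(1) unfolding strong_resolving_iff by blast
  moreover have "mdist (2,h) z \<le> 2" "mdist (2,k) z \<le> 2"
    using \<open>z \<in> S\<close> assms(1) by (auto simp: strong_resolving_iff mdist_def antipodal_def mem_V)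
  ultimately have "mdist (2,h) z = 0 \<or> mdist (2,k) z = 0"
    by (auto simp: strongly_resolves_def)
  then show ?thesis using \<open>z \<in> S\<close> by (auto simp: mdist_eq_0_iff)
qed

lemma card_clique_le_2:
  assumes "D \<subseteq> VH" "\<And>a b. \<lbrakk>a \<in> D; b \<in> D; a \<noteq> b\<rbrakk> \<Longrightarrow> EH a b"
  shows "card D \<le> 2"
proof (rule ccontr)
  assume "\<not> card D \<le> 2"
  then obtain T where "T \<subseteq> D" "card T = 3"
    by (metis not_less_eq_eq numeral_2_eq_2 numeral_3_eq_3 obtain_subset_with_card_n)
  then obtain a b c where "{a,b,c} \<subseteq> D" "a \<noteq> b" "b \<noteq> c" "a \<noteq> c"
    by (auto simp: card_3_iff)
  then show False using assms triangle_free[of a b c] by auto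
qed

lemma card_VH_le_outer_columns:
  assumes "strong_resolving V E S" "g = 0 \<or> g = 1"
  shows "card VH \<le> card (S \<inter> ({g, g+3} \<times> UNIV))"
proof -
  have "finite S" using assms(1) finite_V finite_subset by (auto simp: strong_resolving_iff)
  have "VH \<subseteq> snd ` (S \<inter> ({g, g+3} \<times> UNIV))"
  proof
    fix h assume "h \<in> VH"
    then have "(g,h) \<in> S \<or> (g+3,h) \<in> S"
      using assms antipodal_pair_meets[of S "(g,h)" "(g+3,h)"] by (auto simp: antipodal_def mem_V)
    then show "h \<in> snd ` (S \<inter> ({g, g+3} \<times> UNIV))" by force
  qed
  then have "card VH \<le> card (snd ` (S \<inter> ({g, g+3} \<times> UNIV)))"
    using \<open>finite S\<close> by (intro card_mono) auto
  also have "\<dots> \<le> card (S \<inter> ({g, g+3} \<times> UNIV))"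
    using \<open>finite S\<close> by (intro card_image_le) auto
  finally show ?thesis .
qed

lemma card_VH_le_middle_column:
  assumes "strong_resolving V E S"
  shows "card VH \<le> card (S \<inter> ({2} \<times> UNIV)) + 2"
proof -
  define C where "C = S \<inter> ({2} \<times> UNIV)"
  define D where "D = {h \<in> VH. (2,h) \<notin> S}"
  have "finite C" using assms finite_V finite_subset by (auto simp: strong_resolving_iff C_def)
  have "card D \<le> 2"
    using assms middle_pair_meets by (intro card_clique_le_2) (auto simp: D_def)
  have "VH \<subseteq> snd ` C \<union> D" by (force simp: C_def D_def)
  then have "card VH \<le> card (snd ` C \<union> D)"
    using \<open>finite C\<close> finite_VH by (intro card_mono) (auto simp: D_def)
  also have "\<dots> \<le> card (snd ` C) + card D" by (rule card_Un_le)
  also have "\<dots> \<le> card C + 2" using \<open>card D \<le> 2\<close> card_image_le[OF \<open>finite C\<close>, of snd] by linarith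
  finally show ?thesis by (simp add: C_def)
qed

lemma strong_resolving_card_ge:
  assumes "strong_resolving V E S"
  shows "3 * card VH - 2 \<le> card S"
proof -
  have "finite S" using assms finite_V finite_subset by (auto simp: strong_resolving_iff)
  let ?col = "\<lambda>G. S \<inter> (G \<times> UNIV)"
  have "card (?col {0,3}) + card (?col {1,4}) + card (?col {2}) = card (?col {0,3} \<union> ?col {1,4} \<union> ?col {2})"
    using \<open>finite S\<close> by (subst card_Un_disjoint; auto)+
  also have "\<dots> \<le> card S" using \<open>finite S\<close> by (intro card_mono) auto
  finally show ?thesis
    using card_VH_le_outer_columns[OF assms, of 0] card_VH_le_outer_columns[OF assms, of 1]
      card_VH_le_middle_column[OF assms] by simp
qed

lemma mdist_antipodal_sum:
  assumes "g + 3 < 5" "h \<in> VH" "y \<in> V"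
  shows "mdist (g,h) y + mdist y (g+3,h) = 3"
proof -
  obtain d k where y: "y = (d,k)" "d < 5" "k \<in> VH"
    using assms(3) by (cases y) (auto simp: mem_V)
  consider "k = h" | "EH h k" | "k \<noteq> h" "\<not> EH h k" by blast
  then show ?thesis
  proof cases
    case 1 then show ?thesis
      using y assms(1) by (simp add: mdist_same_fibre)
  next
    case 2
    then have "k \<noteq> h" using EH_irrefl by blast
    then show ?thesis
      using y assms(1) 2 by (simp add: mdist_distinct_fibres E_adjacent_fibres EH_sym[OF 2]; arith)
  next
    case 3
    then have "\<not> EH k h" using EH_sym by blast
    then show ?thesis
      using y assms(1) 3 by (simp add: mdist_distinct_fibres E_nonadjacent_fibres; arith)
  qed
qed

lemma strongly_resolves_commute: "strongly_resolves z x y \<longleftrightarrow> strongly_resolves z y x"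
  by (auto simp: strongly_resolves_def)

lemma strongly_resolves_antipode:
  assumes "antipodal x z" "x \<in> V" "y \<in> V" "z \<in> V"
  shows "strongly_resolves z x y"
proof -
  obtain g h where xz: "x = (g,h) \<and> z = (g+3,h) \<or> z = (g,h) \<and> x = (g+3,h)"
    and "g + 3 < 5" "h \<in> VH"
    using assms(1,2,4) by (cases x; cases z) (auto simp: antipodal_def mem_V)
  with mdist_antipodal_sum[OF this(2,3) assms(3)] have "mdist x y + mdist y z = 3"
    by (metis add.commute mdist_commute)
  then show ?thesis using mdist_antipodal[OF assms(1)] by (simp add: strongly_resolves_def)
qed

lemma induced_path_3:
  obtains a b c where "a \<in> VH" "b \<in> VH" "c \<in> VH" "EH a b" "EH b c" "a \<noteq> c" "\<not> EH a c"
proof -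
  obtain h k where hk: "h \<in> VH" "k \<in> VH" "EH h k"
    using VH_nonempty no_isolated_vertex by blast
  from no_isolated_edge[OF hk] show thesis
  proof
    assume "\<exists>c\<in>VH. c \<noteq> k \<and> EH h c"
    then obtain c where "c \<in> VH" "c \<noteq> k" "EH h c" by blast
    then show thesis
      using that[of k h c] hk triangle_free[of k h c] EH_sym by blast
  next
    assume "\<exists>c\<in>VH. c \<noteq> h \<and> EH k c"
    then obtain c where "c \<in> VH" "c \<noteq> h" "EH k c" by blast
    then show thesis
      using that[of h k c] hk triangle_free[of h k c] by blast
  qed
qed

definition resolving_base :: "'b \<Rightarrow> 'b \<Rightarrow> (nat \<times> 'b) set" where
  "resolving_base a b = ({0,1} \<times> VH) \<union> ({2} \<times> (VH - {a,b}))"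

lemma card_resolving_base:
  assumes "a \<in> VH" "b \<in> VH" "a \<noteq> b"
  shows "card (resolving_base a b) = 3 * card VH - 2"
proof -
  have "card (resolving_base a b) = card ({0,1::nat} \<times> VH) + card ({2::nat} \<times> (VH - {a,b}))"
    unfolding resolving_base_def using finite_VH by (intro card_Un_disjoint) auto
  also have "\<dots> = 2 * card VH + (card VH - 2)"
    using assms finite_VH by (simp add: card_cartesian_product)
  finally show ?thesis
    using assms card_mono[OF finite_VH, of "{a,b}"] by simp
qed

lemma resolving_base_strong_resolving:
  assumes "a \<in> VH" "b \<in> VH" "c \<in> VH" "EH a b" "EH b c" "a \<noteq> c" "\<not> EH a c"
  shows "strong_resolving V E (resolving_base a b)"
  unfolding strong_resolving_iff
proof (intro conjI ballI impI)
  let ?S = "resolving_base a b"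
  show "?S \<subseteq> V" using assms by (auto simp: resolving_base_def mem_V)
  have self: "strongly_resolves x x y" "strongly_resolves y x y" for x y
    by (simp_all add: strongly_resolves_def mdist_eq_0_iff)
  have antipode: "\<exists>z\<in>?S. strongly_resolves z x y"
    if xy: "x \<in> V" "y \<in> V" "fst x \<in> {3,4}" for x y
  proof -
    obtain g h where "x = (g,h)" "g \<in> {3,4}" "h \<in> VH" using xy by (cases x) (auto simp: mem_V)
    then have "antipodal x (g-3,h)" "(g-3,h) \<in> ?S"
      by (auto simp: antipodal_def resolving_base_def)
    then show ?thesis
      using xy \<open>?S \<subseteq> V\<close> strongly_resolves_antipode by blast
  qed
  have middle: "strongly_resolves (2,c) (2,a) (2,b)"
    using assms EH_commute by (auto simp: strongly_resolves_def mdist_def E_iff antipodal_def)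
  fix x y assume "x \<in> V" "y \<in> V" "x \<noteq> y"
  show "\<exists>z\<in>?S. strongly_resolves z x y"
  proof -
    have "fst x \<in> {0,1,2,3,4}" "fst y \<in> {0,1,2,3,4}"
      using \<open>x \<in> V\<close> \<open>y \<in> V\<close> by (auto simp: mem_V)
    then consider "x \<in> ?S" | "y \<in> ?S" | "fst x \<in> {3,4}" | "fst y \<in> {3,4}"
      | "{x,y} = {(2,a),(2,b)}"
      using \<open>x \<in> V\<close> \<open>y \<in> V\<close> \<open>x \<noteq> y\<close>
      by (cases x; cases y) (auto simp: mem_V resolving_base_def doubleton_eq_iff)
    then show ?thesis
    proof cases
      case 3 then show ?thesis using antipode \<open>x \<in> V\<close> \<open>y \<in> V\<close> by blast
    next
      case 4 then show ?thesis using antipode \<open>x \<in> V\<close> \<open>y \<in> V\<close> strongly_resolves_commute by blast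
    next
      case 5
      moreover have "(2,c) \<in> ?S" using assms by (auto simp: resolving_base_def)
      ultimately show ?thesis
        using middle strongly_resolves_commute[of "(2,c)" "(2,a)" "(2,b)"]
        by (auto simp: doubleton_eq_iff)
    qed (use self in blast)+
  qed
qed

theorem sdim_eq: "sdim V E = 3 * card VH - 2"
  unfolding sdim_def
proof (rule Least_equality)
  obtain a b c where "a \<in> VH" "b \<in> VH" "c \<in> VH" "EH a b" "EH b c" "a \<noteq> c" "\<not> EH a c"
    by (rule induced_path_3)
  moreover have "a \<noteq> b" using \<open>EH a b\<close> EH_irrefl by blast
  ultimately show "\<exists>S. strong_resolving V E S \<and> card S = 3 * card VH - 2"
    using resolving_base_strong_resolving card_resolving_base by blast
qed (use strong_resolving_card_ge in blast)

end

lemma ex_not_in_smaller_set: "\<lbrakk>finite A; card A < card B\<rbrakk> \<Longrightarrow> \<exists>c\<in>B. c \<notin> A"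
  by (meson card_mono not_le subsetI)

lemma ex_below_avoiding_6:
  assumes "(r::nat) \<ge> 7"
  shows "\<exists>c<r. c \<notin> {a1, a2, a3, a4, a5, a6}"
proof -
  have "card {a1, a2, a3, a4, a5, a6} \<le> 6"
    using card_length[of "[a1, a2, a3, a4, a5, a6]"] by simp
  then show ?thesis
    using ex_not_in_smaller_set[of "{a1, a2, a3, a4, a5, a6}" "{0..<r}"] assms by auto
qed

lemma P5_modprod_path: "r \<ge> 7 \<Longrightarrow> P5_modprod (path_V r) path_E"
proof (unfold_locales, unfold path_V_def)
  assume r: "r \<ge> 7"
  show "finite {0..<r}" "{0..<r} \<noteq> {}" using r by auto
  show "\<And>h k. path_E h k \<Longrightarrow> path_E k h" "\<And>h. \<not> path_E h h"
    "\<And>a b c. path_E a b \<Longrightarrow> path_E b c \<Longrightarrow> path_E a c \<Longrightarrow> False"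
    by (auto simp: path_E_def)
  show "\<exists>k\<in>{0..<r}. path_E h k" if "h \<in> {0..<r}" for h
    using that r by (cases "h + 1 < r") (auto simp: path_E_def intro: bexI[of _ "h+1"] bexI[of _ "h-1"])
  show "(\<exists>c\<in>{0..<r}. c \<noteq> k \<and> path_E h c) \<or> (\<exists>c\<in>{0..<r}. c \<noteq> h \<and> path_E k c)"
    if "h \<in> {0..<r}" "k \<in> {0..<r}" "path_E h k" for h k
  proof (cases "h = 0 \<or> k = 0")
    case True
    then have "{h,k} = {0,1}" using that by (auto simp: path_E_def)
    moreover have "\<exists>c\<in>{0..<r}. c \<noteq> 0 \<and> path_E 1 c"
      using r by (intro bexI[of _ 2]) (auto simp: path_E_def)
    ultimately show ?thesis by (auto simp: doubleton_eq_iff)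
  next
    case False
    then show ?thesis using that
      by (cases "k = h + 1") (auto simp: path_E_def intro: bexI[of _ "h-1"] bexI[of _ "k-1"])
  qed
  show "\<exists>c\<in>{0..<r}. c \<noteq> h \<and> c \<noteq> k \<and> \<not> path_E h c \<and> \<not> path_E k c" for h k
    using ex_below_avoiding_6[OF r, of h "h+1" "h-1" k "k+1" "k-1"] by (auto simp: path_E_def)
qed

lemma cycle_E_iff:
  assumes "i < r" "j < r"
  shows "cycle_E r i j \<longleftrightarrow>
    i \<noteq> j \<and> (j = i + 1 \<or> (i + 1 = r \<and> j = 0) \<or> i = j + 1 \<or> (j + 1 = r \<and> i = 0))"
proof -
  have "(i+1) mod r = (if i + 1 = r then 0 else i+1)" "(j+1) mod r = (if j + 1 = r then 0 else j+1)"
    using assms by auto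
  then show ?thesis unfolding cycle_E_def using assms by auto
qed

lemma P5_modprod_cycle: "r \<ge> 7 \<Longrightarrow> P5_modprod (cycle_V r) (cycle_E r)"
proof (unfold_locales, unfold cycle_V_def)
  assume r: "r \<ge> 7"
  define succ where "succ h = (if h + 1 = r then 0 else h + 1)" for h
  define pred where "pred h = (if h = 0 then r - 1 else h - 1)" for h
  have neighbours: "succ h < r" "pred h < r" "cycle_E r h (succ h)" "cycle_E r h (pred h)"
    "succ h \<noteq> pred h" if "h < r" for h
    using that r by (auto simp: cycle_E_iff succ_def pred_def)
  show "finite {0..<r}" "{0..<r} \<noteq> {}" using r by auto
  show "\<And>h k. cycle_E r h k \<Longrightarrow> cycle_E r k h" "\<And>h. \<not> cycle_E r h h"
    by (auto simp: cycle_E_def)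
  show "\<And>a b c. \<lbrakk>a \<in> {0..<r}; b \<in> {0..<r}; c \<in> {0..<r};
      cycle_E r a b; cycle_E r b c; cycle_E r a c\<rbrakk> \<Longrightarrow> False"
    using r by (simp add: cycle_E_iff) arith
  show "\<exists>k\<in>{0..<r}. cycle_E r h k" if "h \<in> {0..<r}" for h
    using that neighbours[of h] by auto
  show "(\<exists>c\<in>{0..<r}. c \<noteq> k \<and> cycle_E r h c) \<or> (\<exists>c\<in>{0..<r}. c \<noteq> h \<and> cycle_E r k c)"
    if "h \<in> {0..<r}" for h k
  proof (cases "succ h = k")
    case True
    then show ?thesis using that neighbours[of h] by (intro disjI1 bexI[of _ "pred h"]) auto
  next
    case False
    then show ?thesis using that neighbours[of h] by (intro disjI1 bexI[of _ "succ h"]) auto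
  qed
  show "\<exists>c\<in>{0..<r}. c \<noteq> h \<and> c \<noteq> k \<and> \<not> cycle_E r h c \<and> \<not> cycle_E r k c"
    if "h \<in> {0..<r}" "k \<in> {0..<r}" for h k
  proof -
    obtain c where c: "c < r" "c \<notin> {h, succ h, pred h, k, succ k, pred k}"
      using ex_below_avoiding_6[OF r] by blast
    then have "\<not> cycle_E r h c" "\<not> cycle_E r k c"
      using that by (auto simp: cycle_E_iff succ_def pred_def split: if_splits)
    then show ?thesis using c by auto
  qed
qed

theorem mainTheorem16:
  fixes r :: nat
  assumes "r \<ge> 7"
  shows "sdim (modprod_V (path_V 5) (path_V r)) (modprod_E path_E path_E) = 3 * r - 2
       \<and> sdim (modprod_V (path_V 5) (cycle_V r)) (modprod_E path_E (cycle_E r)) = 3 * r - 2"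
  using P5_modprod.sdim_eq[OF P5_modprod_path[OF assms]]
    P5_modprod.sdim_eq[OF P5_modprod_cycle[OF assms]]
  by (simp add: path_V_def cycle_V_def)

end
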